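(* Let $|\!|\!|\cdot|\!|\!|$ be a norm on $X^n$, and $\mathbf{u}:=(\mathbf{u}_1,\ldots,\mathbf{u}_n)\in \mathbb{S}_X\times\ldots\times\mathbb{S}_X$ ($n$ copies of the unit sphere of $X$). Define $\psi_{\mathbf{u}}(t):=|\!|\!|(t_1\mathbf{u}_1,\ldots,t_{n}\mathbf{u}_n)|\!|\!|$ for all $t:=(t_1,\ldots,t_{n})\in\Omega_n$. (i) If $|\!|\!|\cdot|\!|\!|\in\mathbf{N}_{X^n}$, then $\psi_{\mathbf{u}}\in\mathbf{\Psi}_n$. (ii) If $|\!|\!|\cdot|\!|\!|\in\mathbf{N}^{\rm sc}_{X^n}$, then $\psi_{\mathbf{u}}\in\mathbf{\Psi}^{\rm sc}_{n}$.
   Context: Let $(X,\|\cdot\|)$ be a normed vector space, $n\ge2$. $\mathbf{N}_{X^n}$ is the family of norms $|\!|\!|\cdot|\!|\!|$ on $X^n$ satisfying (A1) $|\!|\!|(x_1,\ldots,x_n)|\!|\!|=|\!|\!|(\pm x_1,\ldots,\pm x_n)|\!|\!|$ for all $x\in X^n$ and all sign choices, and (A2) $|\!|\!|(0_X,\ldots,0_X,v,0_X,\ldots,0_X)|\!|\!|=\|v\|$ for all $v\in X$ in any $i$th position. $\mathbf{N}^{\rm sc}_{X^n}$ is the subclass of strictly convex norms in $\mathbf{N}_{X^n}$ (a norm is strictly convex if the norm of the sum of any two distinct unit vectors is $<2$). $\Omega_n:=\{t\in\mathbb{R}^n\mid t_i\ge0,\ \sum_i t_i=1\}$, $\Omega_n^\circ:=\{t\in\Omega_n\mid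 t_i<1\ \forall i\}$, $\mathbf{e}_i$ the standard unit vectors. $\mathbf{\Psi}_n$ is the class of convex continuous $\psi:\Omega_n\to\mathbb{R}$ with (B1) $\psi(\mathbf{e}_i)=1$ for all $i$ and (B2) $\psi(t)\ge(1-t_i)\psi\big(\frac{t_1}{1-t_i},\ldots,\frac{t_{i-1}}{1-t_i},0,\frac{t_{i+1}}{1-t_i},\ldots,\frac{t_n}{1-t_i}\big)$ for all $t\in\Omega_n^\circ$, $i=1,\ldots,n$; $\mathbf{\Psi}^{\rm sc}_n$ is its subclass of strictly convex functions. *)

theory Defs
  imports "HOL-Analysis.Analysis"
begin

text \<open>X is a real normed vector space (type 'a); X^n is modelled as 'a ^ 'n with
  n = CARD('n). A norm on X^n is an arbitrary function satisfying the norm axioms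
  (it need not be the library's canonical norm on vectors).\<close>

definition is_norm_on :: "('a::real_normed_vector ^ 'n::finite \<Rightarrow> real) \<Rightarrow> bool" where
  "is_norm_on N \<longleftrightarrow>
     (\<forall>x. N x = 0 \<longleftrightarrow> x = 0) \<and>
     (\<forall>c x. N (c *\<^sub>R x) = \<bar>c\<bar> * N x) \<and>
     (\<forall>x y. N (x + y) \<le> N x + N y)"

definition N_class :: "('a::real_normed_vector ^ 'n::finite \<Rightarrow> real) \<Rightarrow> bool" where
  "N_class N \<longleftrightarrow> is_norm_on N \<and>
     (\<forall>x (s :: 'n \<Rightarrow> real). (\<forall>i. s i = 1 \<or> s i = -1) \<longrightarrow>
         N (\<chi> i. s i *\<^sub>R (x $ i)) = N x) \<and>
     (\<forall>v i. N (\<chi> j. if j = i then v else 0) = norm v)"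

definition strictly_convex_norm :: "('a::real_normed_vector ^ 'n::finite \<Rightarrow> real) \<Rightarrow> bool" where
  "strictly_convex_norm N \<longleftrightarrow>
     (\<forall>x y. N x = 1 \<and> N y = 1 \<and> x \<noteq> y \<longrightarrow> N (x + y) < 2)"

definition N_sc_class :: "('a::real_normed_vector ^ 'n::finite \<Rightarrow> real) \<Rightarrow> bool" where
  "N_sc_class N \<longleftrightarrow> N_class N \<and> strictly_convex_norm N"

definition Omega :: "(real ^ 'n::finite) set" where
  "Omega = {t. (\<forall>i. 0 \<le> t $ i) \<and> (\<Sum>i\<in>UNIV. t $ i) = 1}"

definition Omega_int :: "(real ^ 'n::finite) set" where
  "Omega_int = {t \<in> Omega. \<forall>i. t $ i < 1}"

definition Psi_class :: "(real ^ 'n::finite \<Rightarrow> real) \<Rightarrow> bool" where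
  "Psi_class \<psi> \<longleftrightarrow>
     convex_on Omega \<psi> \<and> continuous_on Omega \<psi> \<and>
     (\<forall>i. \<psi> (axis i 1) = 1) \<and>
     (\<forall>t\<in>Omega_int. \<forall>i.
        \<psi> t \<ge> (1 - t $ i) * \<psi> (\<chi> j. if j = i then 0 else t $ j / (1 - t $ i)))"

definition strictly_convex_on :: "'a::real_vector set \<Rightarrow> ('a \<Rightarrow> real) \<Rightarrow> bool" where
  "strictly_convex_on S f \<longleftrightarrow>
     (\<forall>x\<in>S. \<forall>y\<in>S. \<forall>u. x \<noteq> y \<and> 0 < u \<and> u < 1 \<longrightarrow>
        f (u *\<^sub>R x + (1 - u) *\<^sub>R y) < u * f x + (1 - u) * f y)"

definition Psi_sc_class :: "(real ^ 'n::finite \<Rightarrow> real) \<Rightarrow> bool" where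
  "Psi_sc_class \<psi> \<longleftrightarrow> Psi_class \<psi> \<and> strictly_convex_on Omega \<psi>"

end

theory Submission
  imports Defs
begin

text \<open>The function \<open>\<psi>\<^sub>u\<close> is the given norm composed with the injective linear map
  \<open>t \<mapsto> (t\<^sub>1 u\<^sub>1, \<dots>, t\<^sub>n u\<^sub>n)\<close> on the finite-dimensional space \<open>\<real>\<^sup>n\<close>; this gives convexity
  and (Lipschitz) continuity, and (B1) is (A2). For (B2), killing the \<open>i\<close>-th component of a vector
  is the midpoint of the vector and its sign flip at \<open>i\<close>, so by (A1) it does not increase the norm;
  rescaling by \<open>1 - t\<^sub>i\<close> gives (B2). For strict convexity, equality in the triangle inequality of a
  strictly convex norm forces positively parallel vectors, and distinct points of \<open>\<Omega>\<^sub>n\<close> are never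
  positive multiples of each other.\<close>

lemma is_norm_on_scaleR: "is_norm_on N \<Longrightarrow> N (c *\<^sub>R x) = \<bar>c\<bar> * N x"
  unfolding is_norm_on_def by blast

lemma is_norm_on_triangle: "is_norm_on N \<Longrightarrow> N (x + y) \<le> N x + N y"
  unfolding is_norm_on_def by blast

lemma is_norm_on_eq_0_iff: "is_norm_on N \<Longrightarrow> N x = 0 \<longleftrightarrow> x = 0"
  unfolding is_norm_on_def by blast

lemma is_norm_on_minus: "is_norm_on N \<Longrightarrow> N (- x) = N x"
  using is_norm_on_scaleR[of N "-1" x] by simp

lemma is_norm_on_nonneg:
  assumes "is_norm_on N"
  shows "0 \<le> N x"
proof -
  have "N (x + - x) \<le> N x + N (- x)"
    using assms by (rule is_norm_on_triangle)
  then show ?thesis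
    using is_norm_on_eq_0_iff[OF assms, of 0] is_norm_on_minus[OF assms] by simp
qed

lemma is_norm_on_abs_diff_le:
  assumes "is_norm_on N"
  shows "\<bar>N x - N y\<bar> \<le> N (x - y)"
proof -
  have "N x \<le> N (x - y) + N y" "N y \<le> N (y - x) + N x"
    using is_norm_on_triangle[OF assms, of "x - y" y] is_norm_on_triangle[OF assms, of "y - x" x]
    by simp_all
  moreover have "N (y - x) = N (x - y)"
    using is_norm_on_minus[OF assms, of "x - y"] by simp
  ultimately show ?thesis by linarith
qed

lemma is_norm_on_sum:
  assumes "is_norm_on N"
  shows "N (\<Sum>i\<in>A. f i) \<le> (\<Sum>i\<in>A. N (f i))"
proof (induction A rule: infinite_finite_induct)
  case (infinite A)
  then show ?case using is_norm_on_eq_0_iff[OF assms, of 0] by simp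
next
  case empty
  then show ?case using is_norm_on_eq_0_iff[OF assms, of 0] by simp
next
  case (insert a A)
  then show ?case
    using is_norm_on_triangle[OF assms, of "f a" "sum f A"] by simp
qed

lemma is_norm_on_linear_le:
  fixes L :: "'b::euclidean_space \<Rightarrow> 'a::real_normed_vector ^ 'n::finite"
  assumes "is_norm_on N" "linear L"
  shows "N (L x) \<le> (\<Sum>b\<in>Basis. N (L b)) * norm x"
proof -
  have "L x = L (\<Sum>b\<in>Basis. (x \<bullet> b) *\<^sub>R b)"
    by (simp add: euclidean_representation)
  also have "\<dots> = (\<Sum>b\<in>Basis. (x \<bullet> b) *\<^sub>R L b)"
    by (simp add: linear_sum[OF assms(2)] linear_scale[OF assms(2)])
  finally have "L x = (\<Sum>b\<in>Basis. (x \<bullet> b) *\<^sub>R L b)" .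
  then have "N (L x) \<le> (\<Sum>b\<in>Basis. N ((x \<bullet> b) *\<^sub>R L b))"
    using is_norm_on_sum[OF assms(1)] by simp
  also have "\<dots> = (\<Sum>b\<in>Basis. \<bar>x \<bullet> b\<bar> * N (L b))"
    using is_norm_on_scaleR[OF assms(1)] by simp
  also have "\<dots> \<le> (\<Sum>b\<in>Basis. norm x * N (L b))"
    by (intro sum_mono mult_right_mono Basis_le_norm is_norm_on_nonneg[OF assms(1)])
  finally show ?thesis
    by (simp add: sum_distrib_left mult.commute)
qed

lemma lipschitz_on_is_norm_on_linear:
  fixes L :: "'b::euclidean_space \<Rightarrow> 'a::real_normed_vector ^ 'n::finite"
  assumes "is_norm_on N" "linear L"
  shows "(\<Sum>b\<in>Basis. N (L b))-lipschitz_on S (\<lambda>t. N (L t))"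
proof (rule lipschitz_onI)
  fix s t
  have "\<bar>N (L s) - N (L t)\<bar> \<le> N (L (s - t))"
    using is_norm_on_abs_diff_le[OF assms(1), of "L s" "L t"] by (simp add: linear_diff[OF assms(2)])
  also have "\<dots> \<le> (\<Sum>b\<in>Basis. N (L b)) * norm (s - t)"
    using assms by (rule is_norm_on_linear_le)
  finally show "dist (N (L s)) (N (L t)) \<le> (\<Sum>b\<in>Basis. N (L b)) * dist s t"
    by (simp add: dist_real_def dist_norm)
qed (simp add: sum_nonneg is_norm_on_nonneg[OF assms(1)])

lemma convex_on_is_norm_on_linear:
  assumes "is_norm_on N" "linear L" "convex S"
  shows "convex_on S (\<lambda>t. N (L t))"
  unfolding convex_on_def
proof (intro conjI ballI allI impI \<open>convex S\<close>)
  fix x y and a b :: real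
  assume "0 \<le> a" "0 \<le> b"
  then show "N (L (a *\<^sub>R x + b *\<^sub>R y)) \<le> a * N (L x) + b * N (L y)"
    using is_norm_on_triangle[OF assms(1), of "a *\<^sub>R L x" "b *\<^sub>R L y"]
    by (simp add: linear_add[OF assms(2)] linear_scale[OF assms(2)] is_norm_on_scaleR[OF assms(1)])
qed

lemma strictly_convex_norm_triangle_eq:
  assumes "is_norm_on N" "strictly_convex_norm N" "x \<noteq> 0" "y \<noteq> 0"
    and "N (x + y) = N x + N y"
  shows "N y *\<^sub>R x = N x *\<^sub>R y"
proof (rule ccontr)
  assume not_parallel: "N y *\<^sub>R x \<noteq> N x *\<^sub>R y"
  have pos: "0 < N x" "0 < N y"
    using assms(3,4) is_norm_on_eq_0_iff[OF assms(1)] is_norm_on_nonneg[OF assms(1)]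
    by (simp_all add: order_less_le)
  define p where "p = (1 / N x) *\<^sub>R x"
  define q where "q = (1 / N y) *\<^sub>R y"
  have unit: "N p = 1" "N q = 1"
    using pos by (simp_all add: p_def q_def is_norm_on_scaleR[OF assms(1)])
  have "p \<noteq> q"
  proof
    assume "p = q"
    then have "(N x * N y) *\<^sub>R p = (N x * N y) *\<^sub>R q" by simp
    with pos not_parallel show False by (simp add: p_def q_def)
  qed
  with assms(2) unit have mid: "N (p + q) < 2"
    unfolding strictly_convex_norm_def by blast
  define m where "m = min (N x) (N y)"
  have "x + y = N x *\<^sub>R p + N y *\<^sub>R q"
    using pos by (simp add: p_def q_def)
  also have "\<dots> = m *\<^sub>R (p + q) + (N x - m) *\<^sub>R p + (N y - m) *\<^sub>R q"
    by (simp add: algebra_simps)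
  finally have "N (x + y) \<le> N (m *\<^sub>R (p + q)) + N ((N x - m) *\<^sub>R p) + N ((N y - m) *\<^sub>R q)"
    using is_norm_on_triangle[OF assms(1)] by (smt (verit))
  also have "\<dots> = m * N (p + q) + (N x - m) * N p + (N y - m) * N q"
    using pos by (simp add: m_def is_norm_on_scaleR[OF assms(1)])
  also have "\<dots> < N x + N y"
    using mid unit pos by (simp add: m_def)
  finally show False using assms(5) by simp
qed

text \<open>A norm is affine along rays from the origin, so strict convexity of \<open>N \<circ> L\<close> needs a set
  \<open>S\<close> meeting each ray at most once.\<close>

lemma strictly_convex_on_is_norm_on_linear:
  assumes "is_norm_on N" "strictly_convex_norm N" "linear L" "inj L"
    and "0 \<notin> S" and ray: "\<And>x c. x \<in> S \<Longrightarrow> 0 < c \<Longrightarrow> c *\<^sub>R x \<in> S \<Longrightarrow> c = 1"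
  shows "strictly_convex_on S (\<lambda>t. N (L t))"
  unfolding strictly_convex_on_def
proof (intro ballI allI impI)
  fix x y and a :: real
  assume xy: "x \<in> S" "y \<in> S" and a: "x \<noteq> y \<and> 0 < a \<and> a < 1"
  define P where "P = a *\<^sub>R L x"
  define Q where "Q = (1 - a) *\<^sub>R L y"
  have L_nonzero: "L z \<noteq> 0" if "z \<in> S" for z
    using that \<open>0 \<notin> S\<close> injD[OF \<open>inj L\<close>, of z 0] linear_0[OF assms(3)] by auto
  then have "P \<noteq> 0" "Q \<noteq> 0"
    using xy a by (simp_all add: P_def Q_def)
  then have pos: "0 < N P" "0 < N Q"
    using is_norm_on_eq_0_iff[OF assms(1)] is_norm_on_nonneg[OF assms(1)]
    by (simp_all add: order_less_le)
  show "N (L (a *\<^sub>R x + (1 - a) *\<^sub>R y)) < a * N (L x) + (1 - a) * N (L y)"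
  proof (rule ccontr)
    assume "\<not> ?thesis"
    then have "N (P + Q) = N P + N Q"
      using is_norm_on_triangle[OF assms(1), of P Q] a
      by (simp add: P_def Q_def linear_add[OF assms(3)] linear_scale[OF assms(3)]
          is_norm_on_scaleR[OF assms(1)])
    then have "N Q *\<^sub>R P = N P *\<^sub>R Q"
      using strictly_convex_norm_triangle_eq[OF assms(1,2) \<open>P \<noteq> 0\<close> \<open>Q \<noteq> 0\<close>] by simp
    then have "L ((N Q * a) *\<^sub>R x) = L ((N P * (1 - a)) *\<^sub>R y)"
      by (simp add: P_def Q_def linear_scale[OF assms(3)])
    then have parallel: "(N Q * a) *\<^sub>R x = (N P * (1 - a)) *\<^sub>R y"
      by (rule injD[OF \<open>inj L\<close>])
    define c where "c = N Q * a / (N P * (1 - a))"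
    have "y = (1 / (N P * (1 - a))) *\<^sub>R ((N P * (1 - a)) *\<^sub>R y)"
      using pos a by simp
    also have "\<dots> = c *\<^sub>R x"
      by (simp add: c_def flip: parallel)
    finally have "y = c *\<^sub>R x" .
    moreover have "0 < c"
      using pos a by (simp add: c_def)
    ultimately show False
      using ray[OF xy(1)] xy(2) a by fastforce
  qed
qed

lemma convex_Omega: "convex Omega"
  unfolding convex_def Omega_def
  by (simp add: sum.distrib flip: sum_distrib_left)

lemma zero_notin_Omega: "0 \<notin> Omega"
  by (simp add: Omega_def)

lemma scaleR_in_Omega_imp_eq_1: "x \<in> Omega \<Longrightarrow> c *\<^sub>R x \<in> Omega \<Longrightarrow> c = 1"
  by (simp add: Omega_def flip: sum_distrib_left)

lemma N_class_zero_component_le: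
  assumes "N_class N"
  shows "N (\<chi> j. if j = i then 0 else x $ j) \<le> N x"
proof -
  define flip where "flip = (\<chi> j. (if j = i then -1 else 1) *\<^sub>R x $ j)"
  have "N flip = N x"
    using assms unfolding N_class_def flip_def by simp
  moreover have "(\<chi> j. if j = i then 0 else x $ j) = (1 / 2) *\<^sub>R (x + flip)"
    by (simp add: flip_def vec_eq_iff)
  ultimately show ?thesis
    using assms is_norm_on_triangle[of N x flip] is_norm_on_scaleR[of N "1 / 2" "x + flip"]
    unfolding N_class_def by simp
qed

definition scale_components :: "'a::real_vector ^ 'n::finite \<Rightarrow> real ^ 'n \<Rightarrow> 'a ^ 'n" where
  "scale_components u t = (\<chi> i. t $ i *\<^sub>R u $ i)"

lemma linear_scale_components: "linear (scale_components u)"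
  by (rule linearI) (simp_all add: scale_components_def vec_eq_iff algebra_simps)

lemma inj_scale_components:
  assumes "\<And>i. u $ i \<noteq> 0"
  shows "inj (scale_components u)"
  using assms by (intro injI) (simp add: scale_components_def vec_eq_iff)

lemma scale_components_axis: "scale_components u (axis i 1) = axis i (u $ i)"
  by (simp add: scale_components_def axis_def vec_eq_iff)

lemma N_class_scale_components_face_le:
  assumes "N_class N" "t $ i < 1"
  shows "(1 - t $ i) * N (scale_components u (\<chi> j. if j = i then 0 else t $ j / (1 - t $ i)))
    \<le> N (scale_components u t)"
proof -
  have norm: "is_norm_on N"
    using assms(1) by (simp add: N_class_def)
  have "(\<chi> j. if j = i then 0 else scale_components u t $ j)
      = (1 - t $ i) *\<^sub>R scale_components u (\<chi> j. if j = i then 0 else t $ j / (1 - t $ i))"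
    using assms(2) by (simp add: scale_components_def vec_eq_iff)
  then have "(1 - t $ i) * N (scale_components u (\<chi> j. if j = i then 0 else t $ j / (1 - t $ i)))
      = N (\<chi> j. if j = i then 0 else scale_components u t $ j)"
    using assms(2) by (simp add: is_norm_on_scaleR[OF norm])
  also have "\<dots> \<le> N (scale_components u t)"
    using assms(1) by (rule N_class_zero_component_le)
  finally show ?thesis .
qed

lemma Psi_class_scale_components:
  assumes "N_class N" "\<forall>i. norm (u $ i) = 1"
  shows "Psi_class (\<lambda>t. N (scale_components u t))"
proof -
  have norm: "is_norm_on N"
    using assms(1) by (simp add: N_class_def)
  have "N (scale_components u (axis i 1)) = 1" for i
    unfolding scale_components_axis using assms unfolding N_class_def axis_def by simp
  moreover have "t $ i < 1" if "t \<in> Omega_int" for t i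
    using that by (simp add: Omega_int_def)
  ultimately show ?thesis
    unfolding Psi_class_def
    using convex_on_is_norm_on_linear[OF norm linear_scale_components convex_Omega]
      lipschitz_on_continuous_on[OF lipschitz_on_is_norm_on_linear[OF norm linear_scale_components]]
      N_class_scale_components_face_le[OF assms(1)]
    by blast
qed

lemma strictly_convex_on_scale_components:
  assumes "is_norm_on N" "strictly_convex_norm N" "\<And>i. u $ i \<noteq> 0"
  shows "strictly_convex_on Omega (\<lambda>t. N (scale_components u t))"
  using assms zero_notin_Omega scaleR_in_Omega_imp_eq_1
  by (intro strictly_convex_on_is_norm_on_linear linear_scale_components inj_scale_components)

theorem theorem2p9:
  fixes N :: "'a::real_normed_vector ^ 'n::finite \<Rightarrow> real"
    and u :: "'a ^ 'n"
  assumes "CARD('n) \<ge> 2"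
    and "is_norm_on N"
    and "\<forall>i. norm (u $ i) = 1"
  defines "\<psi> \<equiv> (\<lambda>t::real ^ 'n. N (\<chi> i. t $ i *\<^sub>R u $ i))"
  shows "(N_class N \<longrightarrow> Psi_class \<psi>) \<and> (N_sc_class N \<longrightarrow> Psi_sc_class \<psi>)"
proof -
  have \<psi>: "\<psi> = (\<lambda>t. N (scale_components u t))"
    by (simp add: \<psi>_def scale_components_def)
  have nonzero: "u $ i \<noteq> 0" for i
    using assms(3) by (metis norm_zero zero_neq_one)
  have "strictly_convex_on Omega \<psi>" if "strictly_convex_norm N"
    unfolding \<psi> using assms(2) that nonzero by (rule strictly_convex_on_scale_components)
  then show ?thesis
    using Psi_class_scale_components[OF _ assms(3)]
    unfolding \<psi> N_sc_class_def Psi_sc_class_def by blast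
qed

end
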